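(* For every connected graph $G$, $2\,\mathrm{GP}(G)$ is an integer; that is, $\mathrm{GP}(G)$ is either an integer or half of an (odd) integer.
   Context: All graphs are simple and finite. For a connected graph $G$, $d_G(u,v)$ denotes the shortest-path distance and $\mathrm{Aut}(G)$ the automorphism group. The Graovac-Pisanski index is $$\mathrm{GP}(G)=\frac{|V(G)|}{2|\mathrm{Aut}(G)|}\sum_{u\in V(G)}\sum_{\alpha\in \mathrm{Aut}(G)} d_G(u,\alpha(u)).$$ *)

theory Defs
  imports Complex_Main
begin

definition simple_graph :: "'a set \<Rightarrow> ('a \<Rightarrow> 'a \<Rightarrow> bool) \<Rightarrow> bool" where
  "simple_graph V E \<longleftrightarrow> finite V \<and> (\<forall>u v. E u v \<longrightarrow> u \<in> V \<and> v \<in> V)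
     \<and> (\<forall>u. \<not> E u u) \<and> (\<forall>u v. E u v \<longrightarrow> E v u)"

definition is_walk :: "'a set \<Rightarrow> ('a \<Rightarrow> 'a \<Rightarrow> bool) \<Rightarrow> 'a list \<Rightarrow> bool" where
  "is_walk V E ps \<longleftrightarrow> ps \<noteq> [] \<and> set ps \<subseteq> V \<and>
     (\<forall>i. Suc i < length ps \<longrightarrow> E (ps ! i) (ps ! Suc i))"

definition connected_graph :: "'a set \<Rightarrow> ('a \<Rightarrow> 'a \<Rightarrow> bool) \<Rightarrow> bool" where
  "connected_graph V E \<longleftrightarrow> V \<noteq> {} \<and>
     (\<forall>u\<in>V. \<forall>v\<in>V. \<exists>ps. is_walk V E ps \<and> hd ps = u \<and> last ps = v)"

definition gdist :: "'a set \<Rightarrow> ('a \<Rightarrow> 'a \<Rightarrow> bool) \<Rightarrow> 'a \<Rightarrow> 'a \<Rightarrow> nat" where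
  "gdist V E u v = (LEAST n. \<exists>ps. is_walk V E ps \<and> hd ps = u \<and> last ps = v \<and> length ps = Suc n)"

text \<open>Automorphism group: permutations of V preserving adjacency (in both directions),
  normalised to be the identity outside V so that Aut is a finite set.\<close>

definition Aut :: "'a set \<Rightarrow> ('a \<Rightarrow> 'a \<Rightarrow> bool) \<Rightarrow> ('a \<Rightarrow> 'a) set" where
  "Aut V E = {\<alpha>. bij_betw \<alpha> V V \<and> (\<forall>x. x \<notin> V \<longrightarrow> \<alpha> x = x) \<and>
     (\<forall>u\<in>V. \<forall>v\<in>V. E u v \<longleftrightarrow> E (\<alpha> u) (\<alpha> v))}"

definition GP :: "'a set \<Rightarrow> ('a \<Rightarrow> 'a \<Rightarrow> bool) \<Rightarrow> real" where
  "GP V E = real (card V) / (2 * real (card (Aut V E))) *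
     (\<Sum>u\<in>V. \<Sum>\<alpha>\<in>Aut V E. real (gdist V E u (\<alpha> u)))"

end

theory Submission
  imports Defs
begin

text \<open>Group the terms of \<open>\<Sum>\<^sub>u \<Sum>\<^sub>\<alpha> d(u, \<alpha> u)\<close> by the orbits of the automorphism group.
  For \<open>u\<close> in an orbit \<open>O\<close>, the sum over \<open>\<alpha>\<close> equals \<open>|Stab u|\<close> times \<open>D(u) = \<Sum>\<^sub>v\<^sub>\<in>\<^sub>O d(u,v)\<close>,
  and \<open>D\<close> is constant on \<open>O\<close> because automorphisms preserve distances. By orbit-stabilizer the
  contribution of \<open>O\<close> is \<open>|O| |Stab u| D(u) = |Aut G| D(u)\<close>, so the double sum is a multiple of
  \<open>|Aut G|\<close> and \<open>2 GP(G) = |V| \<Sum>\<^sub>u \<Sum>\<^sub>\<alpha> d(u, \<alpha> u) / |Aut G|\<close> is an integer.\<close>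

locale perm_group_on =
  fixes V :: "'a set" and G :: "('a \<Rightarrow> 'a) set"
  assumes finite_V: "finite V" and finite_G: "finite G"
    and id_in_G: "id \<in> G"
    and comp_in_G: "g \<in> G \<Longrightarrow> h \<in> G \<Longrightarrow> g \<circ> h \<in> G"
    and left_inverse_in_G: "g \<in> G \<Longrightarrow> \<exists>h\<in>G. h \<circ> g = id"
    and maps_into_V: "g \<in> G \<Longrightarrow> x \<in> V \<Longrightarrow> g x \<in> V"
begin

definition orbit :: "'a \<Rightarrow> 'a set" where
  "orbit u = (\<lambda>g. g u) ` G"

definition stabilizer :: "'a \<Rightarrow> ('a \<Rightarrow> 'a) set" where
  "stabilizer u = {g \<in> G. g u = u}"

lemma inverse_in_G:
  assumes "g \<in> G"
  obtains h where "h \<in> G" "h \<circ> g = id" "g \<circ> h = id"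
proof -
  obtain h where h: "h \<in> G" "h \<circ> g = id" using left_inverse_in_G assms by blast
  obtain h' where h': "h' \<in> G" "h' \<circ> h = id" using left_inverse_in_G h(1) by blast
  have "g = h'"
    by (metis h(2) h'(2) comp_assoc comp_id id_comp)
  then show ?thesis using that h h'(2) by blast
qed

lemma finite_orbit: "finite (orbit u)"
  using finite_G by (simp add: orbit_def)

lemma orbit_subset_V: "u \<in> V \<Longrightarrow> orbit u \<subseteq> V"
  by (auto simp: orbit_def maps_into_V)

lemma in_own_orbit: "u \<in> orbit u"
  unfolding orbit_def using id_in_G by (rule rev_image_eqI) simp

lemma orbit_eq:
  assumes "w \<in> orbit u"
  shows "orbit w = orbit u"
proof -
  obtain \<gamma> where \<gamma>: "\<gamma> \<in> G" "w = \<gamma> u" using assms by (auto simp: orbit_def)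
  obtain \<delta> where \<delta>: "\<delta> \<in> G" "\<delta> \<circ> \<gamma> = id" using inverse_in_G[OF \<gamma>(1)] by blast
  have "g w \<in> orbit u" if "g \<in> G" for g
    using comp_in_G[OF that \<gamma>(1)] \<gamma>(2) by (auto simp: orbit_def intro!: rev_image_eqI[of "g \<circ> \<gamma>"])
  moreover have "g u \<in> orbit w" if "g \<in> G" for g
    using comp_in_G[OF that \<delta>(1)] \<gamma>(2)
    by (auto simp: orbit_def pointfree_idE[OF \<delta>(2)] intro!: rev_image_eqI[of "g \<circ> \<delta>"])
  ultimately show ?thesis by (auto simp: orbit_def)
qed

lemma image_orbit:
  assumes "g \<in> G"
  shows "g ` orbit u = orbit u"
proof -
  obtain h where h: "h \<in> G" "g \<circ> h = id" using inverse_in_G[OF assms] by blast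
  have "g (k u) \<in> orbit u" if "k \<in> G" for k
    using comp_in_G[OF assms that] by (auto simp: orbit_def intro!: rev_image_eqI[of "g \<circ> k"])
  moreover have "k u \<in> g ` orbit u" if "k \<in> G" for k
    using comp_in_G[OF h(1) that]
    by (auto simp: orbit_def pointfree_idE[OF h(2)] intro!: rev_image_eqI[of "(h \<circ> k) u"])
  ultimately show ?thesis by (auto simp: orbit_def)
qed

lemma card_fiber_eq_card_stabilizer:
  assumes "v \<in> orbit u"
  shows "card {g \<in> G. g u = v} = card (stabilizer u)"
proof -
  obtain \<gamma> where \<gamma>: "\<gamma> \<in> G" "v = \<gamma> u" using assms by (auto simp: orbit_def)
  obtain \<delta> where \<delta>: "\<delta> \<in> G" "\<delta> \<circ> \<gamma> = id" "\<gamma> \<circ> \<delta> = id" using inverse_in_G[OF \<gamma>(1)] .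
  have "bij_betw ((\<circ>) \<gamma>) (stabilizer u) {g \<in> G. g u = v}"
  proof (rule bij_betw_byWitness[where f' = "(\<circ>) \<delta>"])
    show "\<forall>g\<in>stabilizer u. \<delta> \<circ> (\<gamma> \<circ> g) = g" "\<forall>g\<in>{g \<in> G. g u = v}. \<gamma> \<circ> (\<delta> \<circ> g) = g"
      using \<delta> by (simp_all flip: comp_assoc)
    show "(\<circ>) \<gamma> ` stabilizer u \<subseteq> {g \<in> G. g u = v}"
      using \<gamma> comp_in_G by (auto simp: stabilizer_def)
    show "(\<circ>) \<delta> ` {g \<in> G. g u = v} \<subseteq> stabilizer u"
      using \<gamma> \<delta> comp_in_G by (auto simp: stabilizer_def pointfree_idE)
  qed
  then show ?thesis by (simp add: bij_betw_same_card)
qed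

lemma sum_over_G_as_orbit_sum:
  "(\<Sum>g\<in>G. F (g u)) = card (stabilizer u) * (\<Sum>v\<in>orbit u. F v :: nat)"
proof -
  have "(\<Sum>g\<in>G. F (g u)) = (\<Sum>v\<in>orbit u. \<Sum>g\<in>{g \<in> G. g u = v}. F (g u))"
    using sum.image_gen[OF finite_G, of "\<lambda>g. F (g u)" "\<lambda>g. g u"] by (simp add: orbit_def)
  also have "\<dots> = (\<Sum>v\<in>orbit u. card (stabilizer u) * F v)"
    by (intro sum.cong refl) (simp add: card_fiber_eq_card_stabilizer)
  finally show ?thesis by (simp add: sum_distrib_left)
qed

lemma orbit_stabilizer: "card G = card (orbit u) * card (stabilizer u)"
  using sum_over_G_as_orbit_sum[of "\<lambda>_. 1" u] by simp

lemma card_stabilizer_eq: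
  assumes "w \<in> orbit u"
  shows "card (stabilizer w) = card (stabilizer u)"
proof -
  have "card (orbit u) > 0"
    using finite_orbit in_own_orbit by (auto simp: card_gt_0_iff)
  then show ?thesis
    using orbit_stabilizer[of u] orbit_stabilizer[of w] orbit_eq[OF assms] by simp
qed

lemma orbit_sum_invariant:
  assumes inv: "\<And>g u v. g \<in> G \<Longrightarrow> f (g u) (g v) = f u v" and "w \<in> orbit u"
  shows "(\<Sum>v\<in>orbit w. f w v) = (\<Sum>v\<in>orbit u. f u v)"
proof -
  obtain \<gamma> where \<gamma>: "\<gamma> \<in> G" "w = \<gamma> u" using assms(2) by (auto simp: orbit_def)
  obtain \<delta> where "\<delta> \<in> G" "\<delta> \<circ> \<gamma> = id" using inverse_in_G[OF \<gamma>(1)] by blast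
  then have "inj \<gamma>" by (metis inj_on_id inj_on_imageI2)
  have "(\<Sum>v\<in>orbit w. f w v) = (\<Sum>v\<in>\<gamma> ` orbit u. f (\<gamma> u) v)"
    using orbit_eq[OF assms(2)] image_orbit[OF \<gamma>(1)] \<gamma>(2) by simp
  also have "\<dots> = (\<Sum>v\<in>orbit u. f (\<gamma> u) (\<gamma> v))"
    using \<open>inj \<gamma>\<close> by (simp add: sum.reindex inj_on_subset[of \<gamma> UNIV])
  finally show ?thesis using inv[OF \<gamma>(1)] by simp
qed

theorem card_dvd_sum_invariant:
  fixes f :: "'a \<Rightarrow> 'a \<Rightarrow> nat"
  assumes inv: "\<And>g u v. g \<in> G \<Longrightarrow> f (g u) (g v) = f u v"
  shows "card G dvd (\<Sum>u\<in>V. \<Sum>g\<in>G. f u (g u))"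
proof -
  have "(\<Sum>u\<in>V. \<Sum>g\<in>G. f u (g u)) = (\<Sum>C\<in>orbit ` V. \<Sum>u\<in>{x \<in> V. orbit x = C}. \<Sum>g\<in>G. f u (g u))"
    by (rule sum.image_gen[OF finite_V])
  also have "card G dvd \<dots>"
  proof (rule dvd_sum)
    fix C assume "C \<in> orbit ` V"
    then obtain r where r: "r \<in> V" "C = orbit r" by blast
    have C_eq: "{x \<in> V. orbit x = C} = orbit r"
      using r orbit_subset_V orbit_eq in_own_orbit by blast
    have "(\<Sum>u\<in>orbit r. \<Sum>g\<in>G. f u (g u))
        = (\<Sum>u\<in>orbit r. card (stabilizer r) * (\<Sum>v\<in>orbit r. f r v))"
      using sum_over_G_as_orbit_sum card_stabilizer_eq orbit_sum_invariant[of f, OF inv] by (intro sum.cong) auto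
    also have "\<dots> = card G * (\<Sum>v\<in>orbit r. f r v)"
      by (simp add: orbit_stabilizer[of r])
    finally show "card G dvd (\<Sum>u\<in>{x \<in> V. orbit x = C}. \<Sum>g\<in>G. f u (g u))"
      by (simp add: C_eq)
  qed
  finally show ?thesis .
qed

end

lemma Aut_maps_into: "\<alpha> \<in> Aut V E \<Longrightarrow> x \<in> V \<Longrightarrow> \<alpha> x \<in> V"
  unfolding Aut_def by (auto dest: bij_betwE)

lemma id_in_Aut: "id \<in> Aut V E"
  unfolding Aut_def by auto

lemma comp_in_Aut: "\<alpha> \<in> Aut V E \<Longrightarrow> \<beta> \<in> Aut V E \<Longrightarrow> \<alpha> \<circ> \<beta> \<in> Aut V E"
  unfolding Aut_def by (auto intro: bij_betw_trans) (metis bij_betwE)+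

lemma Aut_left_inverse:
  assumes "\<alpha> \<in> Aut V E"
  shows "\<exists>\<beta>\<in>Aut V E. \<beta> \<circ> \<alpha> = id"
proof -
  have bij: "bij_betw \<alpha> V V" and outside: "\<And>x. x \<notin> V \<Longrightarrow> \<alpha> x = x"
    and adj: "\<And>u v. u \<in> V \<Longrightarrow> v \<in> V \<Longrightarrow> E u v \<longleftrightarrow> E (\<alpha> u) (\<alpha> v)"
    using assms unfolding Aut_def by auto
  define \<beta> where "\<beta> x = (if x \<in> V then inv_into V \<alpha> x else x)" for x
  have bij\<beta>: "bij_betw \<beta> V V"
    using bij_betw_inv_into[OF bij] by (rule bij_betw_cong[THEN iffD1, rotated]) (simp add: \<beta>_def)
  have \<alpha>\<beta>: "\<alpha> (\<beta> x) = x" if "x \<in> V" for x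
    using that bij by (simp add: \<beta>_def bij_betw_inv_into_right)
  have "E u v \<longleftrightarrow> E (\<beta> u) (\<beta> v)" if "u \<in> V" "v \<in> V" for u v
    using adj[OF bij_betw_apply[OF bij\<beta> that(1)] bij_betw_apply[OF bij\<beta> that(2)]] \<alpha>\<beta> that by simp
  then have "\<beta> \<in> Aut V E"
    using bij\<beta> by (simp add: Aut_def \<beta>_def)
  moreover have "\<beta> (\<alpha> x) = x" for x
    using bij outside bij_betwE[OF bij] by (cases "x \<in> V") (simp_all add: \<beta>_def bij_betw_inv_into_left)
  ultimately show ?thesis by (auto simp: fun_eq_iff)
qed

lemma finite_Aut:
  assumes "finite V"
  shows "finite (Aut V E)"
proof -
  let ?cut = "\<lambda>\<alpha> x. if x \<in> V then \<alpha> x else undefined"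
  have "inj_on ?cut (Aut V E)"
  proof (rule inj_onI)
    fix \<alpha> \<beta> assume "\<alpha> \<in> Aut V E" "\<beta> \<in> Aut V E" "?cut \<alpha> = ?cut \<beta>"
    then have "\<alpha> x = \<beta> x" for x
      unfolding Aut_def fun_eq_iff by (cases "x \<in> V") (simp_all, metis)
    then show "\<alpha> = \<beta>" by blast
  qed
  moreover have "?cut ` Aut V E \<subseteq> {f. \<forall>x. (x \<in> V \<longrightarrow> f x \<in> V) \<and> (x \<notin> V \<longrightarrow> f x = undefined)}"
    using Aut_maps_into by auto
  ultimately show ?thesis
    using finite_set_of_finite_funs[OF assms assms] finite_subset finite_imageD by blast
qed

lemma perm_group_on_Aut: "finite V \<Longrightarrow> perm_group_on V (Aut V E)"
  by unfold_locales
    (simp_all add: finite_Aut id_in_Aut comp_in_Aut Aut_left_inverse Aut_maps_into)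

lemma is_walk_map_Aut:
  assumes "\<alpha> \<in> Aut V E" and "is_walk V E ps"
  shows "is_walk V E (map \<alpha> ps)"
proof -
  have adj: "\<And>u v. u \<in> V \<Longrightarrow> v \<in> V \<Longrightarrow> E u v \<longleftrightarrow> E (\<alpha> u) (\<alpha> v)"
    using assms(1) by (simp add: Aut_def)
  have "E (\<alpha> (ps ! i)) (\<alpha> (ps ! Suc i))" if "Suc i < length ps" for i
    using assms(2) that adj[of "ps ! i" "ps ! Suc i"] unfolding is_walk_def
    by (metis Suc_lessD nth_mem subsetD)
  then show ?thesis
    using assms(2) Aut_maps_into[OF assms(1)] by (auto simp: is_walk_def)
qed

lemma gdist_Aut_invariant:
  assumes "\<alpha> \<in> Aut V E"
  shows "gdist V E (\<alpha> u) (\<alpha> v) = gdist V E u v"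
proof -
  obtain \<beta> where \<beta>: "\<beta> \<in> Aut V E" "\<beta> \<circ> \<alpha> = id" using Aut_left_inverse[OF assms] by blast
  have transport: "is_walk V E (map \<gamma> ps) \<and> hd (map \<gamma> ps) = \<gamma> x \<and> last (map \<gamma> ps) = \<gamma> y
      \<and> length (map \<gamma> ps) = length ps"
    if "\<gamma> \<in> Aut V E" "is_walk V E ps" "hd ps = x" "last ps = y" for \<gamma> ps x y
    using that is_walk_map_Aut[OF that(1,2)] by (auto simp: is_walk_def hd_map last_map)
  have "(\<exists>ps. is_walk V E ps \<and> hd ps = \<alpha> u \<and> last ps = \<alpha> v \<and> length ps = n)
      \<longleftrightarrow> (\<exists>ps. is_walk V E ps \<and> hd ps = u \<and> last ps = v \<and> length ps = n)" for n
  proof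
    assume "\<exists>ps. is_walk V E ps \<and> hd ps = \<alpha> u \<and> last ps = \<alpha> v \<and> length ps = n"
    then show "\<exists>ps. is_walk V E ps \<and> hd ps = u \<and> last ps = v \<and> length ps = n"
      using transport[OF \<beta>(1)] pointfree_idE[OF \<beta>(2)] by metis
  next
    assume "\<exists>ps. is_walk V E ps \<and> hd ps = u \<and> last ps = v \<and> length ps = n"
    then show "\<exists>ps. is_walk V E ps \<and> hd ps = \<alpha> u \<and> last ps = \<alpha> v \<and> length ps = n"
      using transport[OF assms] by metis
  qed
  then show ?thesis by (simp add: gdist_def)
qed

theorem corollary3p3:
  fixes V :: "'a set" and E :: "'a \<Rightarrow> 'a \<Rightarrow> bool"
  assumes "simple_graph V E" and "connected_graph V E"
  shows "2 * GP V E \<in> \<int>"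
proof -
  interpret perm_group_on V "Aut V E"
    using assms(1) by (simp add: simple_graph_def perm_group_on_Aut)
  obtain k where k: "(\<Sum>u\<in>V. \<Sum>\<alpha>\<in>Aut V E. gdist V E u (\<alpha> u)) = card (Aut V E) * k"
    using card_dvd_sum_invariant[of "gdist V E", OF gdist_Aut_invariant] by (auto elim: dvdE)
  have "card (Aut V E) > 0"
    using finite_G id_in_G by (auto simp: card_gt_0_iff)
  then have "2 * GP V E = real (card V * k)"
    unfolding GP_def by (simp flip: of_nat_sum add: k)
  then show ?thesis by simp
qed

end
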